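(* Let $(\mathcal A,r)$ be a potential population game with potential $\Phi$, $\mathcal G=(\mathcal H,\boldsymbol\eta,W)$ an undirected connected community network, and $\mathbf f$ an imitation mechanism satisfying Assumption 1. For $\mathbf x\in\mathcal X$ with $\mathbf y=\mathbf x\mathbf 1$, define $\dot y_i=\sum_{h\in\mathcal H}\dot x_{ih}$ using the right-hand side of the network imitation dynamics at $\mathbf x$, and $\dot\Phi(\mathbf y)=\sum_{i\in\mathcal A}\frac{\partial\Phi(\mathbf y)}{\partial y_i}\dot y_i$. Then $\dot\Phi(\mathbf y)\ge 0$ for every $\mathbf x\in\mathcal X$, with equality if and only if $\mathbf x\in\mathcal X^\bullet$.
   Context: Let $\mathcal A$ be a finite set of actions, $\mathcal Y=\{\mathbf y\in\mathbb R_+^{\mathcal A}:\mathbf 1^\top\mathbf y=1\}$, reward functions $r_i:\mathcal Y\to\mathbb R$. The game $(\mathcal A,r)$ is potential if there is a differentiable $\Phi:\mathcal Y\to\mathbb R$ (differentiable on a neighborhood of $\mathcal Y$) with $r_j(\mathbf y)-r_i(\mathbf y)=\frac{\partial\Phi}{\partial y_j}(\mathbf y)-\frac{\partial\Phi}{\partial y_i}(\mathbf y)$ for all $i,j\in\mathcal A$, $\mathbf y\in\mathcal Y$. Community network $\mathcal G=(\mathcal H,\boldsymbol\eta,W)$: finite $\mathcal H$, $\eta_h>0$ with $\sum_h\eta_h=1$, nonnegative $W$ with positive diagonal; connected = $W$ irreducible; undirected = $W=W^\top$. $\mathcal X=\{\mathbf x\in\mathbb R_+^{\mathcal A\times\mathcal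 H}:\mathbf 1^\top\mathbf x=\boldsymbol\eta^\top\}$. Imitation mechanism: Lipschitz $\mathbf f:\mathcal Y\to\mathbb R_+^{\mathcal A\times\mathcal A}$. Dynamics: $$\dot x_{ih}=\sum_{j\in\mathcal A}\sum_{k\in\mathcal H}\big(x_{jh}W_{hk}x_{ik}f_{ji}(\mathbf x\mathbf 1)-x_{ih}W_{hk}x_{jk}f_{ij}(\mathbf x\mathbf 1)\big).$$ Assumption 1: $\operatorname{sgn}(f_{ij}(\mathbf y)-f_{ji}(\mathbf y))=\operatorname{sgn}(r_j(\mathbf y)-r_i(\mathbf y))$ for all $i,j,\mathbf y$. $\mathcal Y^\bullet=\{\mathbf y\in\mathcal Y:y_i>0,y_j>0\Rightarrow r_i(\mathbf y)=r_j(\mathbf y)\}$, $\mathcal X^\bullet=\{\mathbf x\in\mathcal X:\mathbf x\mathbf 1\in\mathcal Y^\bullet\}$. *)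

theory Defs
  imports "HOL-Analysis.Analysis"
begin

definition simplexY :: "(real ^ 'a::finite) set" where
  "simplexY = {y. (\<forall>i. 0 \<le> y $ i) \<and> (\<Sum>i\<in>UNIV. y $ i) = 1}"

definition stateX :: "('h::finite \<Rightarrow> real) \<Rightarrow> ('a::finite \<Rightarrow> 'h \<Rightarrow> real) set" where
  "stateX \<eta> = {x. (\<forall>i h. 0 \<le> x i h) \<and> (\<forall>h. (\<Sum>i\<in>UNIV. x i h) = \<eta> h)}"

definition aggr :: "('a::finite \<Rightarrow> 'h::finite \<Rightarrow> real) \<Rightarrow> real ^ 'a" where
  "aggr x = (\<chi> i. \<Sum>h\<in>UNIV. x i h)"

text \<open>Potential game: Phi differentiable on an open neighbourhood U of Y, with
  (Frechet) derivative DPhi y at y; partial derivative w.r.t. y_j is DPhi y (axis j 1).\<close>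
definition potential_game ::
  "('a::finite \<Rightarrow> real ^ 'a \<Rightarrow> real) \<Rightarrow> (real ^ 'a \<Rightarrow> real) \<Rightarrow> (real ^ 'a \<Rightarrow> real ^ 'a \<Rightarrow> real) \<Rightarrow> bool" where
  "potential_game r \<Phi> D\<Phi> \<longleftrightarrow>
     (\<exists>U. open U \<and> simplexY \<subseteq> U \<and> (\<forall>y\<in>U. (\<Phi> has_derivative D\<Phi> y) (at y))) \<and>
     (\<forall>y\<in>simplexY. \<forall>i j. r j y - r i y = D\<Phi> y (axis j 1) - D\<Phi> y (axis i 1))"

definition community_network :: "('h::finite \<Rightarrow> real) \<Rightarrow> ('h \<Rightarrow> 'h \<Rightarrow> real) \<Rightarrow> bool" where
  "community_network \<eta> W \<longleftrightarrow> (\<forall>h. 0 < \<eta> h) \<and> (\<Sum>h\<in>UNIV. \<eta> h) = 1 \<and>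
     (\<forall>h k. 0 \<le> W h k) \<and> (\<forall>h. 0 < W h h)"

definition irreducible_mat :: "('h \<Rightarrow> 'h \<Rightarrow> real) \<Rightarrow> bool" where
  "irreducible_mat W \<longleftrightarrow> (\<forall>h k. (h, k) \<in> {(a, b). 0 < W a b}\<^sup>*)"

definition undirected :: "('h \<Rightarrow> 'h \<Rightarrow> real) \<Rightarrow> bool" where
  "undirected W \<longleftrightarrow> (\<forall>h k. W h k = W k h)"

definition imitation_mechanism :: "(real ^ 'a::finite \<Rightarrow> 'a \<Rightarrow> 'a \<Rightarrow> real) \<Rightarrow> bool" where
  "imitation_mechanism f \<longleftrightarrow> (\<forall>y\<in>simplexY. \<forall>i j. 0 \<le> f y i j) \<and>
     (\<exists>L. \<forall>y\<in>simplexY. \<forall>y'\<in>simplexY. \<forall>i j. \<bar>f y i j - f y' i j\<bar> \<le> L * dist y y')"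

definition assumption1 :: "('a::finite \<Rightarrow> real ^ 'a \<Rightarrow> real) \<Rightarrow> (real ^ 'a \<Rightarrow> 'a \<Rightarrow> 'a \<Rightarrow> real) \<Rightarrow> bool" where
  "assumption1 r f \<longleftrightarrow> (\<forall>y\<in>simplexY. \<forall>i j. sgn (f y i j - f y j i) = sgn (r j y - r i y))"

definition xdot :: "('h::finite \<Rightarrow> 'h \<Rightarrow> real) \<Rightarrow> (real ^ 'a::finite \<Rightarrow> 'a \<Rightarrow> 'a \<Rightarrow> real)
    \<Rightarrow> ('a \<Rightarrow> 'h \<Rightarrow> real) \<Rightarrow> 'a \<Rightarrow> 'h \<Rightarrow> real" where
  "xdot W f x i h = (\<Sum>j\<in>UNIV. \<Sum>k\<in>UNIV.
      x j h * W h k * x i k * f (aggr x) j i - x i h * W h k * x j k * f (aggr x) i j)"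

definition ydot :: "('h::finite \<Rightarrow> 'h \<Rightarrow> real) \<Rightarrow> (real ^ 'a::finite \<Rightarrow> 'a \<Rightarrow> 'a \<Rightarrow> real)
    \<Rightarrow> ('a \<Rightarrow> 'h \<Rightarrow> real) \<Rightarrow> 'a \<Rightarrow> real" where
  "ydot W f x i = (\<Sum>h\<in>UNIV. xdot W f x i h)"

definition Phidot :: "(real ^ 'a::finite \<Rightarrow> real ^ 'a \<Rightarrow> real) \<Rightarrow> ('h::finite \<Rightarrow> 'h \<Rightarrow> real)
    \<Rightarrow> (real ^ 'a \<Rightarrow> 'a \<Rightarrow> 'a \<Rightarrow> real) \<Rightarrow> ('a \<Rightarrow> 'h \<Rightarrow> real) \<Rightarrow> real" where
  "Phidot D\<Phi> W f x = (\<Sum>i\<in>UNIV. D\<Phi> (aggr x) (axis i 1) * ydot W f x i)"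

definition Ybullet :: "('a::finite \<Rightarrow> real ^ 'a \<Rightarrow> real) \<Rightarrow> (real ^ 'a) set" where
  "Ybullet r = {y\<in>simplexY. \<forall>i j. 0 < y $ i \<and> 0 < y $ j \<longrightarrow> r i y = r j y}"

definition Xbullet :: "('a::finite \<Rightarrow> real ^ 'a \<Rightarrow> real) \<Rightarrow> ('h::finite \<Rightarrow> real) \<Rightarrow> ('a \<Rightarrow> 'h \<Rightarrow> real) set" where
  "Xbullet r \<eta> = {x\<in>stateX \<eta>. aggr x \<in> Ybullet r}"

end

theory Submission imports Defs begin

text \<open>With the contact weights \<open>M\<^sub>i\<^sub>j = \<Sum>\<^sub>h\<^sub>k x\<^sub>i\<^sub>h W\<^sub>h\<^sub>k x\<^sub>j\<^sub>k\<close>, which are symmetric because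
  \<open>W\<close> is, the aggregate dynamics read \<open>\<dot>y\<^sub>i = \<Sum>\<^sub>j M\<^sub>i\<^sub>j (f\<^sub>j\<^sub>i - f\<^sub>i\<^sub>j)\<close>. Symmetrizing over the pair
  \<open>(i, j)\<close> and using the potential gives
  \<open>2 \<dot>\<Phi> = \<Sum>\<^sub>i\<^sub>j (r\<^sub>i - r\<^sub>j)(f\<^sub>j\<^sub>i - f\<^sub>i\<^sub>j) M\<^sub>i\<^sub>j\<close>, a sum of nonnegative terms by Assumption 1.
  It vanishes iff \<open>r\<^sub>i = r\<^sub>j\<close> whenever \<open>M\<^sub>i\<^sub>j > 0\<close>; since every community is populated,
  \<open>W\<close> has positive diagonal and is irreducible, equality of rewards propagates along
  paths of the network to all pairs of actions that are used somewhere.\<close>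

definition contact :: "('h::finite \<Rightarrow> 'h \<Rightarrow> real) \<Rightarrow> ('a \<Rightarrow> 'h \<Rightarrow> real) \<Rightarrow> 'a \<Rightarrow> 'a \<Rightarrow> real" where
  "contact W x i j = (\<Sum>h\<in>UNIV. \<Sum>k\<in>UNIV. x i h * W h k * x j k)"

lemma contact_sym:
  assumes "undirected W"
  shows "contact W x j i = contact W x i j"
proof -
  have "contact W x j i = (\<Sum>k\<in>UNIV. \<Sum>h\<in>UNIV. x j h * W h k * x i k)"
    unfolding contact_def by (rule sum.swap)
  also have "\<dots> = contact W x i j"
    using assms unfolding contact_def undirected_def by (simp add: mult_ac)
  finally show ?thesis .
qed

lemma contact_nonneg:
  assumes "\<forall>i h. 0 \<le> x i h" "\<forall>h k. 0 \<le> W h k"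
  shows "0 \<le> contact W x i j"
  using assms unfolding contact_def by (auto intro!: sum_nonneg)

lemma contact_pos:
  assumes nn: "\<forall>i h. 0 \<le> x i h" and W: "\<forall>h k. 0 \<le> W h k"
    and "0 < x i h" "0 < W h k" "0 < x j k"
  shows "0 < contact W x i j"
proof -
  have "0 < x i h * W h k * x j k" using assms by simp
  also have "\<dots> \<le> (\<Sum>k\<in>UNIV. x i h * W h k * x j k)"
    by (rule member_le_sum) (auto simp: nn W)
  also have "\<dots> \<le> contact W x i j"
    unfolding contact_def by (rule member_le_sum) (auto intro!: sum_nonneg simp: nn W)
  finally show ?thesis .
qed

lemma contact_eq_0_if_unused:
  assumes "(\<forall>h. x i h = 0) \<or> (\<forall>h. x j h = 0)"
  shows "contact W x i j = 0"
  using assms unfolding contact_def by auto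

lemma ydot_eq_contact:
  assumes "undirected W"
  shows "ydot W f x i = (\<Sum>j\<in>UNIV. contact W x i j * (f (aggr x) j i - f (aggr x) i j))"
proof -
  have "ydot W f x i = (\<Sum>j\<in>UNIV. \<Sum>h\<in>UNIV. \<Sum>k\<in>UNIV.
      x j h * W h k * x i k * f (aggr x) j i - x i h * W h k * x j k * f (aggr x) i j)"
    unfolding ydot_def xdot_def by (rule sum.swap)
  also have "\<dots> = (\<Sum>j\<in>UNIV. contact W x j i * f (aggr x) j i - contact W x i j * f (aggr x) i j)"
    by (simp add: contact_def sum_subtractf sum_distrib_right)
  finally show ?thesis
    by (simp add: contact_sym[OF assms] right_diff_distrib)
qed

lemma double_sum_symmetrize:
  fixes T :: "'i \<Rightarrow> 'i \<Rightarrow> 'a::comm_semiring_1"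
  shows "2 * (\<Sum>i\<in>S. \<Sum>j\<in>S. T i j) = (\<Sum>i\<in>S. \<Sum>j\<in>S. T i j + T j i)"
  by (simp add: sum.distrib sum.swap[of T] mult_2)

lemma Phidot_symmetrized:
  assumes "undirected W"
  shows "2 * Phidot D\<Phi> W f x = (\<Sum>i\<in>UNIV. \<Sum>j\<in>UNIV.
     (D\<Phi> (aggr x) (axis i 1) - D\<Phi> (aggr x) (axis j 1))
       * (f (aggr x) j i - f (aggr x) i j) * contact W x i j)"
proof -
  let ?g = "\<lambda>i. D\<Phi> (aggr x) (axis i 1)" and ?F = "f (aggr x)"
  have "2 * Phidot D\<Phi> W f x
      = 2 * (\<Sum>i\<in>UNIV. \<Sum>j\<in>UNIV. ?g i * (contact W x i j * (?F j i - ?F i j)))"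
    unfolding Phidot_def ydot_eq_contact[OF assms] by (simp add: sum_distrib_left)
  also have "\<dots> = (\<Sum>i\<in>UNIV. \<Sum>j\<in>UNIV. (?g i - ?g j) * (?F j i - ?F i j) * contact W x i j)"
  proof -
    have "?g i * (contact W x i j * (?F j i - ?F i j)) + ?g j * (contact W x j i * (?F i j - ?F j i))
        = (?g i - ?g j) * (?F j i - ?F i j) * contact W x i j" for i j
      by (simp add: contact_sym[OF assms, of x j i] algebra_simps)
    then show ?thesis unfolding double_sum_symmetrize by simp
  qed
  finally show ?thesis .
qed

lemma sgn_eq_imp_mult_nonneg:
  fixes a b :: "'a::linordered_idom"
  assumes "sgn b = sgn a"
  shows "0 \<le> a * b \<and> (a * b = 0 \<longleftrightarrow> a = 0)"
  using assms by (auto simp: sgn_if zero_le_mult_iff split: if_splits)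

lemma aggr_in_simplexY:
  assumes "x \<in> stateX \<eta>" "community_network \<eta> W"
  shows "aggr x \<in> simplexY"
proof -
  have "(\<Sum>i\<in>UNIV. aggr x $ i) = (\<Sum>h\<in>UNIV. \<Sum>i\<in>UNIV. x i h)"
    unfolding aggr_def by (simp add: sum.swap[of x])
  also have "\<dots> = 1"
    using assms by (simp add: stateX_def community_network_def)
  finally show ?thesis
    using assms(1) by (auto simp: simplexY_def aggr_def stateX_def intro!: sum_nonneg)
qed

lemma stateX_community_populated:
  assumes "x \<in> stateX \<eta>" "0 < \<eta> h"
  obtains i where "0 < x i h"
proof (rule ccontr)
  assume "\<not> thesis"
  with that have "\<forall>i. x i h \<le> 0" by (meson not_le)
  hence "(\<Sum>i\<in>UNIV. x i h) \<le> 0" by (simp add: sum_nonpos)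
  with assms show False by (simp add: stateX_def)
qed

text \<open>The positive diagonal of \<open>W\<close> handles the base case; populated intermediate
  communities let the equality propagate along each edge of a path.\<close>

lemma eq_propagates_along_network:
  assumes x: "x \<in> stateX \<eta>" and net: "community_network \<eta> W"
    and eq: "\<forall>i j. contact W x i j = 0 \<or> R i = R j"
    and path: "(h, k) \<in> {(a, b). 0 < W a b}\<^sup>*"
  shows "0 < x i h \<Longrightarrow> 0 < x j k \<Longrightarrow> R i = R j"
  using path
proof (induction k arbitrary: j rule: rtrancl_induct)
  case base
  have "0 < contact W x i j"
    using x net base by (intro contact_pos) (auto simp: stateX_def community_network_def)
  with eq show ?case by force
next
  case (step m k)
  obtain l where l: "0 < x l m"
    using stateX_community_populated[OF x] net by (auto simp: community_network_def)
  have "0 < contact W x l j"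
    using x net l step by (intro contact_pos) (auto simp: stateX_def community_network_def)
  with eq step.IH[OF step.prems(1) l] show ?case by force
qed

lemma contact_eq_iff_eq_on_support:
  assumes x: "x \<in> stateX \<eta>" and net: "community_network \<eta> W" and irr: "irreducible_mat W"
  shows "(\<forall>i j. contact W x i j = 0 \<or> R i = R j)
     \<longleftrightarrow> (\<forall>i j. 0 < aggr x $ i \<and> 0 < aggr x $ j \<longrightarrow> R i = R j)"
proof
  assume eq: "\<forall>i j. contact W x i j = 0 \<or> R i = R j"
  show "\<forall>i j. 0 < aggr x $ i \<and> 0 < aggr x $ j \<longrightarrow> R i = R j"
  proof (intro allI impI)
    fix i j assume "0 < aggr x $ i \<and> 0 < aggr x $ j"
    then obtain h k where "0 < x i h" "0 < x j k"
      unfolding aggr_def by (metis not_le sum_nonpos vec_lambda_beta)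
    have "(h, k) \<in> {(a, b). 0 < W a b}\<^sup>*"
      using irr unfolding irreducible_mat_def by blast
    then show "R i = R j"
      using \<open>0 < x i h\<close> \<open>0 < x j k\<close> by (rule eq_propagates_along_network[OF x net eq])
  qed
next
  assume supp: "\<forall>i j. 0 < aggr x $ i \<and> 0 < aggr x $ j \<longrightarrow> R i = R j"
  have unused: "x i h = 0" if "\<not> 0 < aggr x $ i" for i h
  proof -
    have "(\<Sum>h\<in>UNIV. x i h) = 0"
      using that aggr_in_simplexY[OF x net] by (simp add: simplexY_def aggr_def less_le)
    thus ?thesis using x by (simp add: stateX_def sum_nonneg_eq_0_iff)
  qed
  show "\<forall>i j. contact W x i j = 0 \<or> R i = R j"
  proof (intro allI)
    fix i j
    show "contact W x i j = 0 \<or> R i = R j"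
    proof (cases "0 < aggr x $ i \<and> 0 < aggr x $ j")
      case True
      with supp show ?thesis by blast
    next
      case False
      with unused show ?thesis by (auto intro: contact_eq_0_if_unused)
    qed
  qed
qed

lemma Phidot_nonneg_and_eq_0_iff:
  assumes pot: "potential_game r \<Phi> D\<Phi>" and net: "community_network \<eta> W"
    and sym: "undirected W" and sgn: "assumption1 r f" and x: "x \<in> stateX \<eta>"
  shows "0 \<le> Phidot D\<Phi> W f x
    \<and> (Phidot D\<Phi> W f x = 0 \<longleftrightarrow> (\<forall>i j. contact W x i j = 0 \<or> r i (aggr x) = r j (aggr x)))"
proof -
  define y where "y = aggr x"
  define P where "P i j = (r i y - r j y) * (f y j i - f y i j) * contact W x i j" for i j
  have y: "y \<in> simplexY" unfolding y_def by (rule aggr_in_simplexY[OF x net])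
  have Phidot: "2 * Phidot D\<Phi> W f x = (\<Sum>i\<in>UNIV. \<Sum>j\<in>UNIV. P i j)"
    using Phidot_symmetrized[OF sym] pot y unfolding P_def y_def potential_game_def by simp
  have P: "0 \<le> P i j \<and> (P i j = 0 \<longleftrightarrow> contact W x i j = 0 \<or> r i y = r j y)" for i j
  proof -
    have "sgn (f y j i - f y i j) = sgn (r i y - r j y)"
      using sgn y unfolding assumption1_def by blast
    then have "0 \<le> (r i y - r j y) * (f y j i - f y i j)
        \<and> ((r i y - r j y) * (f y j i - f y i j) = 0 \<longleftrightarrow> r i y - r j y = 0)"
      by (rule sgn_eq_imp_mult_nonneg)
    moreover have "0 \<le> contact W x i j"
      using x net by (intro contact_nonneg) (auto simp: stateX_def community_network_def)
    ultimately show ?thesis unfolding P_def by auto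
  qed
  have "0 \<le> (\<Sum>i\<in>UNIV. \<Sum>j\<in>UNIV. P i j)"
    using P by (auto intro!: sum_nonneg)
  moreover have "(\<Sum>i\<in>UNIV. \<Sum>j\<in>UNIV. P i j) = 0 \<longleftrightarrow> (\<forall>i j. P i j = 0)"
    using P by (simp add: sum_nonneg_eq_0_iff sum_nonneg)
  ultimately show ?thesis
    using Phidot P unfolding y_def by auto
qed

theorem lemma2:
  fixes r :: "'a::finite \<Rightarrow> real ^ 'a \<Rightarrow> real"
    and \<Phi> :: "real ^ 'a \<Rightarrow> real"
    and D\<Phi> :: "real ^ 'a \<Rightarrow> real ^ 'a \<Rightarrow> real"
    and \<eta> :: "'h::finite \<Rightarrow> real"
    and W :: "'h \<Rightarrow> 'h \<Rightarrow> real"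
    and f :: "real ^ 'a \<Rightarrow> 'a \<Rightarrow> 'a \<Rightarrow> real"
  assumes "potential_game r \<Phi> D\<Phi>"
    and "community_network \<eta> W"
    and "undirected W"
    and "irreducible_mat W"
    and "imitation_mechanism f"
    and "assumption1 r f"
  shows "\<forall>x\<in>stateX \<eta>. 0 \<le> Phidot D\<Phi> W f x \<and> (Phidot D\<Phi> W f x = 0 \<longleftrightarrow> x \<in> Xbullet r \<eta>)"
proof
  fix x :: "'a \<Rightarrow> 'h \<Rightarrow> real" assume x: "x \<in> stateX \<eta>"
  have "x \<in> Xbullet r \<eta> \<longleftrightarrow> (\<forall>i j. 0 < aggr x $ i \<and> 0 < aggr x $ j \<longrightarrow> r i (aggr x) = r j (aggr x))"
    using x aggr_in_simplexY[OF x assms(2)] by (auto simp: Xbullet_def Ybullet_def)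
  also have "\<dots> \<longleftrightarrow> (\<forall>i j. contact W x i j = 0 \<or> r i (aggr x) = r j (aggr x))"
    by (rule contact_eq_iff_eq_on_support[OF x assms(2,4), symmetric])
  finally show "0 \<le> Phidot D\<Phi> W f x \<and> (Phidot D\<Phi> W f x = 0 \<longleftrightarrow> x \<in> Xbullet r \<eta>)"
    using Phidot_nonneg_and_eq_0_iff[OF assms(1-3,6) x] by simp
qed

end
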